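(* The only novel partition of length $4$ is $(1,1,1,1)$.
   Context: An integer partition is $\lambda=(\lambda_1,\dots,\lambda_k)$ with integers $\lambda_1\ge\dots\ge\lambda_k\ge 1$; $k$ is its length. For $v\in\mathbb{Z}^k$ let $v^{\perp B}=\{x\in\{-1,1\}^k: v\cdot x=0\}$; $\lambda^{\perp B}$ is this set for $(\lambda_1,\dots,\lambda_k)$. $V_\lambda\subset\mathbb{Z}^k$ is the set of vectors obtained from $(\lambda_1,\dots,\lambda_k)$ by permuting coordinates and changing signs of some coordinates, with first coordinate positive. For $I\subset\{1,\dots,m\}$, $\mathrm{Proj}_I:\{-1,1\}^m\to\{-1,1\}^{|I|}$ keeps the coordinates indexed by $I$. Reduction: for partitions $\mu$ of length $m$ and $\lambda$ of length $k\le m$, $\mu\Rightarrow\lambda$ iff there exist $I\subset\{1,\dots,m\}$, $|I|=k$, and $v\in V_\lambda$ with $\mathrm{Proj}_I(\mu^{\perp B})\subset v^{\perp B}$. $\mu$ strictly reduces to $\lambda$ iff $\mu\Rightarrow\lambda$ and not $\lambda\Rightarrow\mu$. Partitions $\lambda,\mu$ of the same length are equivalent iff there is $w\in V_\mu$ with $\lambda^{\perp B}=w^{\perp B}$. A partition $\lambda$ is novel iff $\lambda^{\perp B}\neq\emptyset$, $\lambda$ strictly reduces to no partition, and $\lambda$ is lexicographically smallest among partitions equivalent to it. *)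

theory Defs
  imports "HOL-Library.Multiset"
begin

text \<open>Integer vectors of length k are int lists of length k; coordinates are 0-indexed.\<close>

definition is_partition :: "int list \<Rightarrow> bool" where
  "is_partition l \<longleftrightarrow> l \<noteq> [] \<and> sorted_wrt (\<ge>) l \<and> (\<forall>a\<in>set l. a \<ge> 1)"

definition sign_vectors :: "nat \<Rightarrow> int list set" where
  "sign_vectors k = {x. length x = k \<and> set x \<subseteq> {-1, 1}}"

definition dotp :: "int list \<Rightarrow> int list \<Rightarrow> int" where
  "dotp v x = sum_list (map2 (*) v x)"

definition perpB :: "int list \<Rightarrow> int list set" where
  "perpB v = {x \<in> sign_vectors (length v). dotp v x = 0}"

definition Vset :: "int list \<Rightarrow> int list set" where
  "Vset l = {v. \<exists>p s. mset p = mset l \<and> s \<in> sign_vectors (length l) \<and>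
                     v = map2 (*) s p \<and> v \<noteq> [] \<and> hd v > 0}"

definition Proj :: "nat set \<Rightarrow> int list \<Rightarrow> int list" where
  "Proj I x = nths x I"

definition reduces :: "int list \<Rightarrow> int list \<Rightarrow> bool" (infix "\<Rrightarrow>" 50) where
  "reduces mu l \<longleftrightarrow> length l \<le> length mu \<and>
     (\<exists>I v. I \<subseteq> {0..<length mu} \<and> card I = length l \<and> v \<in> Vset l \<and>
            Proj I ` perpB mu \<subseteq> perpB v)"

definition strictly_reduces :: "int list \<Rightarrow> int list \<Rightarrow> bool" where
  "strictly_reduces mu l \<longleftrightarrow> reduces mu l \<and> \<not> reduces l mu"

definition equivalent :: "int list \<Rightarrow> int list \<Rightarrow> bool" where
  "equivalent l mu \<longleftrightarrow> length l = length mu \<and> (\<exists>w\<in>Vset mu. perpB l = perpB w)"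

definition lex_le :: "int list \<Rightarrow> int list \<Rightarrow> bool" where
  "lex_le a b \<longleftrightarrow> a = b \<or> (a, b) \<in> lexord {(x, y). x < y}"

definition novel :: "int list \<Rightarrow> bool" where
  "novel l \<longleftrightarrow> is_partition l \<and> perpB l \<noteq> {} \<and>
     (\<forall>mu. is_partition mu \<longrightarrow> \<not> strictly_reduces l mu) \<and>
     (\<forall>mu. is_partition mu \<and> equivalent l mu \<longrightarrow> lex_le l mu)"

end

theory Submission
  imports Defs
begin

text \<open>
  Novelty of (1,1,1,1): it is lexicographically least among partitions of its
  length, and whenever (1,1,1,1) reduces to a partition \<mu>, the six balanced
  sign vectors (two entries 1, two entries -1) force the index set I to be
  everything and the witness vector to be constant, so \<mu> = (c,c,c,c).  Such a
  \<mu> has the same orthogonal sign vectors as (1,1,1,1) and reduces back, so the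
  reduction is not strict.

  Every other partition l of length 4 fails to be novel: if l = (c,c,c,c) with
  c > 1 it is equivalent to the lexicographically smaller (1,1,1,1); otherwise
  every sign vector orthogonal to l has opposite signs in its first two
  coordinates, so l strictly reduces to (1,1).
\<close>

lemma length_4_cases: "length xs = 4 \<Longrightarrow> \<exists>a b c d. xs = [a, b, c, d]"
  by (auto simp: numeral_eq_Suc length_Suc_conv)

lemma dotp_scale: "dotp (map ((*) c) v) x = c * dotp v x"
  unfolding dotp_def
proof (induction v arbitrary: x)
  case (Cons a v)
  then show ?case by (cases x) (simp_all add: algebra_simps)
qed simp

lemma perpB_scale:
  assumes "c \<noteq> 0"
  shows "perpB (map ((*) c) v) = perpB v"
  using assms by (simp add: perpB_def dotp_scale)

lemma partition_in_Vset:
  assumes "is_partition l"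
  shows "l \<in> Vset l"
proof -
  have "map2 (*) (replicate (length l) 1) l = l"
    by (induction l) simp_all
  moreover have "l \<noteq> []" using assms by (simp add: is_partition_def)
  moreover have "hd l \<ge> 1"
    using assms hd_in_set[OF \<open>l \<noteq> []\<close>] unfolding is_partition_def by blast
  ultimately show ?thesis
    unfolding Vset_def sign_vectors_def
    by (intro CollectI exI[of _ l] exI[of _ "replicate (length l) 1"]) auto
qed

lemma Vset_abs:
  assumes "v \<in> Vset mu" "is_partition mu"
  shows "mset (map abs v) = mset mu" "hd v > 0" "v \<noteq> []"
proof -
  obtain p s where ps: "mset p = mset mu" "s \<in> sign_vectors (length mu)"
    "v = map2 (*) s p" "v \<noteq> []" "hd v > 0"
    using assms(1) unfolding Vset_def by blast
  have lp: "length p = length mu" using ps(1) by (metis size_mset)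
  have ls: "length s = length mu" "set s \<subseteq> {-1, 1}"
    using ps(2) by (auto simp: sign_vectors_def)
  have pos: "\<forall>a\<in>set p. a \<ge> 1"
    using ps(1) assms(2) by (metis is_partition_def set_mset_mset)
  have "map abs v = p"
  proof (rule nth_equalityI)
    show "length (map abs v) = length p" using ps(3) lp ls by simp
    fix i assume "i < length (map abs v)"
    then have i: "i < length p" "i < length s" using ps(3) lp ls by auto
    have "s ! i \<in> {-1, 1}" "p ! i \<ge> 1" using ls(2) pos i nth_mem by blast+
    then show "map abs v ! i = p ! i" using ps(3) i by (auto simp: abs_mult)
  qed
  then show "mset (map abs v) = mset mu" using ps(1) by simp
  show "hd v > 0" "v \<noteq> []" using ps by auto
qed

text \<open>Reduction between vectors of equal length only needs an inclusion of the
  orthogonal sign vectors (take I to be all coordinates).\<close>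

lemma reduces_of_perpB_subset:
  assumes "length mu = length l" "w \<in> Vset l" "perpB mu \<subseteq> perpB w"
  shows "mu \<Rrightarrow> l"
proof -
  have "Proj {0..<length mu} x = x" if "x \<in> perpB mu" for x
    using that by (simp add: Proj_def perpB_def sign_vectors_def nths_all)
  then have "Proj {0..<length mu} ` perpB mu \<subseteq> perpB w"
    using assms(3) by auto
  then show ?thesis
    using assms(1,2) unfolding reduces_def by (intro conjI exI) auto
qed

text \<open>A reduction to a strictly shorter partition is always strict, since a
  partition cannot reduce to a longer one.\<close>

lemma strictly_reduces_of_shorter:
  assumes "length l < length mu" "mu \<Rrightarrow> l"
  shows "strictly_reduces mu l"
  using assms by (simp add: strictly_reduces_def reduces_def)

lemma lex_le_pointwise:
  assumes "list_all2 (\<le>) a b"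
  shows "lex_le a b"
  using assms
proof (induction rule: list_all2_induct)
  case (Cons x xs y ys)
  then show ?case by (auto simp: lex_le_def)
qed (simp add: lex_le_def)

lemma novel_not_strictly_reduces:
  "novel l \<Longrightarrow> is_partition mu \<Longrightarrow> \<not> strictly_reduces l mu"
  unfolding novel_def by blast

lemma novel_lex_least:
  "novel l \<Longrightarrow> is_partition mu \<Longrightarrow> equivalent l mu \<Longrightarrow> lex_le l mu"
  unfolding novel_def by blast

lemma nths_4:
  "nths [a, b, c, d] I = (if 0 \<in> I then [a] else []) @ (if 1 \<in> I then [b] else [])
     @ (if 2 \<in> I then [c] else []) @ (if 3 \<in> I then [d] else [])"
  by (simp add: nths_Cons numeral_eq_Suc)

lemma card_subset_4:
  assumes "I \<subseteq> {0..<4::nat}"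
  shows "card I = length (filter (\<lambda>i. i \<in> I) [0, 1, 2, 3])"
proof -
  have "x = 0 \<or> x = 1 \<or> x = 2 \<or> x = 3" if "x \<in> I" for x
    using assms that by auto
  then have "I = set (filter (\<lambda>i. i \<in> I) [0, 1, 2, 3])" by auto
  moreover have "distinct (filter (\<lambda>i. i \<in> I) [0, 1, 2, 3 :: nat])" by simp
  ultimately show ?thesis by (metis distinct_card)
qed

definition balanced4 :: "int list set" where
  "balanced4 = {[1,1,-1,-1], [1,-1,1,-1], [1,-1,-1,1], [-1,-1,1,1], [-1,1,-1,1], [-1,1,1,-1]}"

lemma balanced4_perpB: "balanced4 \<subseteq> perpB [1, 1, 1, 1]"
  by (auto simp: balanced4_def perpB_def sign_vectors_def dotp_def)

lemma balanced4_projection_rigid: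
  assumes I: "I \<subseteq> {0..<4}" and len: "length v = card I"
    and nonzero: "\<forall>a\<in>set v. a \<noteq> 0" and "v \<noteq> []"
    and orth: "\<forall>x\<in>balanced4. dotp v (nths x I) = 0"
  shows "\<exists>c. v = [c, c, c, c]"
proof -
  have "dotp v (nths [1,1,-1,-1] I) = 0" "dotp v (nths [1,-1,1,-1] I) = 0"
    "dotp v (nths [1,-1,-1,1] I) = 0" "dotp v (nths [-1,-1,1,1] I) = 0"
    "dotp v (nths [-1,1,-1,1] I) = 0" "dotp v (nths [-1,1,1,-1] I) = 0"
    using orth by (simp_all add: balanced4_def)
  then show ?thesis
    using len[unfolded card_subset_4[OF I]] nonzero \<open>v \<noteq> []\<close>
    apply (cases "0 \<in> I"; cases "1 \<in> I"; cases "2 \<in> I"; cases "3 \<in> I")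
    apply (simp_all add: nths_4)
    apply (auto simp: dotp_def length_Suc_conv numeral_eq_Suc)
    done
qed

lemma reduces_from_ones:
  assumes red: "[1, 1, 1, 1] \<Rrightarrow> mu" and part: "is_partition mu"
  shows "\<exists>c \<ge> 1. mu = [c, c, c, c]"
proof -
  obtain I v where I_len: "I \<subseteq> {0..<length [1, 1, 1, 1 :: int]}" and card_I: "card I = length mu"
    and v: "v \<in> Vset mu" and sub: "Proj I ` perpB [1, 1, 1, 1] \<subseteq> perpB v"
    using red unfolding reduces_def by blast
  have I: "I \<subseteq> {0..<4}" using I_len by (simp add: numeral_eq_Suc)
  have mset_v: "mset (map abs v) = mset mu" and "hd v > 0" "v \<noteq> []"
    using Vset_abs[OF v part] by auto
  have len_v: "length v = length mu" using mset_v by (metis length_map size_mset)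
  have set_v: "abs ` set v = set mu" using mset_v by (metis list.set_map set_mset_mset)
  have "\<forall>a\<in>set v. a \<noteq> 0" using set_v part by (force simp: is_partition_def)
  moreover have "\<forall>x\<in>balanced4. dotp v (nths x I) = 0"
    using balanced4_perpB sub by (force simp: perpB_def Proj_def)
  ultimately obtain c where c: "v = [c, c, c, c]"
    using balanced4_projection_rigid[OF I] card_I len_v \<open>v \<noteq> []\<close> by force
  have "c \<ge> 1" using \<open>hd v > 0\<close> c by simp
  have "length mu = 4" using len_v c by simp
  have "mu = replicate (length mu) \<bar>c\<bar>"
    using set_v c by (intro replicate_length_same[symmetric]) auto
  also have "\<dots> = [c, c, c, c]"
    using \<open>length mu = 4\<close> \<open>c \<ge> 1\<close> by (simp add: numeral_eq_Suc)
  finally show ?thesis using \<open>c \<ge> 1\<close> by blast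
qed

lemma perpB_const: "c \<noteq> 0 \<Longrightarrow> perpB [c, c, c, c] = perpB [1, 1, 1, 1]"
  using perpB_scale[of c "[1, 1, 1, 1]"] by simp

lemma ones_partition: "is_partition [1, 1, 1, 1]"
  by (simp add: is_partition_def)

lemma novel_ones: "novel [1, 1, 1, 1]"
  unfolding novel_def
proof (intro conjI allI impI)
  show "is_partition [1, 1, 1, 1]" by (fact ones_partition)
  show "perpB [1, 1, 1, 1] \<noteq> {}" using balanced4_perpB by (auto simp: balanced4_def)
  fix mu
  show "\<not> strictly_reduces [1, 1, 1, 1] mu" if part: "is_partition mu"
  proof
    assume strict: "strictly_reduces [1, 1, 1, 1] mu"
    then obtain c where "c \<ge> 1" and mu: "mu = [c, c, c, c]"
      using reduces_from_ones[OF _ part] unfolding strictly_reduces_def by blast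
    then have "perpB mu = perpB [1, 1, 1, 1]" using perpB_const[of c] by simp
    then have "mu \<Rrightarrow> [1, 1, 1, 1]"
      using reduces_of_perpB_subset[OF _ partition_in_Vset[OF ones_partition]] mu by simp
    then show False using strict unfolding strictly_reduces_def by blast
  qed
  show "lex_le [1, 1, 1, 1] mu" if "is_partition mu \<and> equivalent [1, 1, 1, 1] mu"
  proof -
    have "length mu = 4" using that by (simp add: equivalent_def)
    then obtain a b c d where mu: "mu = [a, b, c, d]" using length_4_cases by blast
    then have "a \<ge> 1" "b \<ge> 1" "c \<ge> 1" "d \<ge> 1" using that by (simp_all add: is_partition_def)
    then show ?thesis using mu by (intro lex_le_pointwise) simp
  qed
qed

text \<open>For a non-constant partition (a,b,c,d), a balancing sign vector must give
  opposite signs to a and b: equal signs would need a + b \<le> c + d.\<close>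

lemma perpB_first_pair:
  assumes "is_partition [a, b, c, d]" "\<not> (a = b \<and> b = c \<and> c = d)"
    and "x \<in> perpB [a, b, c, d]"
  shows "nths x {0, 1} \<in> perpB [1, 1]"
proof -
  have "length x = 4" using assms(3) by (simp add: perpB_def sign_vectors_def)
  then obtain x0 x1 x2 x3 where x: "x = [x0, x1, x2, x3]" using length_4_cases by blast
  have signs: "x0 \<in> {-1, 1}" "x1 \<in> {-1, 1}" "x2 \<in> {-1, 1}" "x3 \<in> {-1, 1}"
    and balance: "a * x0 + b * x1 + c * x2 + d * x3 = 0"
    using assms(3) x by (auto simp: perpB_def sign_vectors_def dotp_def)
  have "a \<ge> b" "b \<ge> c" "c \<ge> d" "d \<ge> 1" using assms(1) by (auto simp: is_partition_def)
  then have "x0 + x1 = 0" using signs balance assms(2) by auto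
  then show ?thesis using x signs by (simp add: nths_4 perpB_def sign_vectors_def dotp_def)
qed

lemma not_novel_other:
  assumes part: "is_partition l" and len: "length l = 4" and ne: "l \<noteq> [1, 1, 1, 1]"
  shows "\<not> novel l"
proof
  assume nov: "novel l"
  obtain a b c d where l: "l = [a, b, c, d]" using length_4_cases[OF len] by blast
  have "a \<ge> b" "b \<ge> c" "c \<ge> d" "d \<ge> 1" using part l by (auto simp: is_partition_def)
  show False
  proof (cases "a = b \<and> b = c \<and> c = d")
    case True
    then have "a > 1" using ne l \<open>d \<ge> 1\<close> by auto
    then have "equivalent l [1, 1, 1, 1]"
      using partition_in_Vset[OF ones_partition] perpB_const[of a] l True
      by (auto simp: equivalent_def)
    moreover have "\<not> lex_le l [1, 1, 1, 1]" using \<open>a > 1\<close> l by (auto simp: lex_le_def)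
    ultimately show False using novel_lex_least[OF nov ones_partition] by blast
  next
    case False
    have "Proj {0, 1} ` perpB l \<subseteq> perpB [1, 1]"
      using perpB_first_pair[OF part[unfolded l] False] l by (auto simp: Proj_def)
    moreover have "is_partition [1, 1 :: int]" by (simp add: is_partition_def)
    ultimately have "l \<Rrightarrow> [1, 1]"
      using len partition_in_Vset[of "[1, 1]"] unfolding reduces_def
      by (intro conjI exI[of _ "{0, 1}"] exI[of _ "[1, 1]"]) auto
    then have "strictly_reduces l [1, 1]" using len by (intro strictly_reduces_of_shorter) auto
    then show False using novel_not_strictly_reduces[OF nov \<open>is_partition [1, 1 :: int]\<close>] by blast
  qed
qed

theorem mainTheorem8:
  shows "\<forall>l. is_partition l \<and> length l = 4 \<longrightarrow> (novel l \<longleftrightarrow> l = [1, 1, 1, 1])"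
  using not_novel_other novel_ones by blast

end
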